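(* In $\mathbf{MetCH_{sep}}$, the pushout of an embedding along any morphism is an embedding.
   Context: A metric on a set $X$ is a map $d\colon X\times X\to[0,\infty]$ with $d(x,x)=0$ and $d(x,z)\le d(x,y)+d(y,z)$ (not necessarily symmetric, $\infty$ allowed); separated means $d(x,y)=0=d(y,x)$ implies $x=y$. A separated metric compact Hausdorff space is a compact Hausdorff space with a separated metric $d\colon X\times X\to[0,\infty]$ continuous with respect to the upper topology on $[0,\infty]$ (open sets $]u,\infty]$, plus $\emptyset$ and $[0,\infty]$). $\mathbf{MetCH_{sep}}$ has these spaces as objects and continuous non-expansive maps ($d_Y(f(x),f(y))\le d_X(x,y)$) as morphisms. An embedding is an injective morphism $f\colon X\to Y$ with $d_X(x,y)=d_Y(f(x),f(y))$ for all $x,y$. ($\mathbf{MetCH_{sep}}$ is cocomplete, so pushouts exist.) *)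

theory Defs
  imports "HOL-Analysis.Analysis" "HOL-Library.Extended_Nonnegative_Real"
begin

text \<open>Objects of MetCH_sep: a topology T (carrier topspace T) with a function
  d into [0,\<infinity>] (ennreal), considered on the carrier only.\<close>

definition metric_on :: "'a set \<Rightarrow> ('a \<Rightarrow> 'a \<Rightarrow> ennreal) \<Rightarrow> bool" where
  "metric_on S d \<longleftrightarrow> (\<forall>x\<in>S. d x x = 0) \<and>
     (\<forall>x\<in>S. \<forall>y\<in>S. \<forall>z\<in>S. d x z \<le> d x y + d y z)"

definition separated_metric :: "'a set \<Rightarrow> ('a \<Rightarrow> 'a \<Rightarrow> ennreal) \<Rightarrow> bool" where
  "separated_metric S d \<longleftrightarrow> (\<forall>x\<in>S. \<forall>y\<in>S. d x y = 0 \<and> d y x = 0 \<longrightarrow> x = y)"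

text \<open>Continuity of d : X \<times> X \<rightarrow> [0,\<infinity>] w.r.t. the upper topology on [0,\<infinity>],
  whose nontrivial open sets are ]u,\<infinity>]: preimages of these must be open.\<close>
definition upper_continuous :: "'a topology \<Rightarrow> ('a \<Rightarrow> 'a \<Rightarrow> ennreal) \<Rightarrow> bool" where
  "upper_continuous T d \<longleftrightarrow>
     (\<forall>u::ennreal. openin (prod_topology T T)
        {p \<in> topspace T \<times> topspace T. u < d (fst p) (snd p)})"

definition metCH_sep :: "'a topology \<Rightarrow> ('a \<Rightarrow> 'a \<Rightarrow> ennreal) \<Rightarrow> bool" where
  "metCH_sep T d \<longleftrightarrow> compact_space T \<and> Hausdorff_space T \<and>
     metric_on (topspace T) d \<and> separated_metric (topspace T) d \<and> upper_continuous T d"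

definition metCH_mor :: "'a topology \<Rightarrow> ('a \<Rightarrow> 'a \<Rightarrow> ennreal) \<Rightarrow>
    'b topology \<Rightarrow> ('b \<Rightarrow> 'b \<Rightarrow> ennreal) \<Rightarrow> ('a \<Rightarrow> 'b) \<Rightarrow> bool" where
  "metCH_mor T d T' d' f \<longleftrightarrow> continuous_map T T' f \<and>
     (\<forall>x\<in>topspace T. \<forall>y\<in>topspace T. d' (f x) (f y) \<le> d x y)"

definition metCH_embedding :: "'a topology \<Rightarrow> ('a \<Rightarrow> 'a \<Rightarrow> ennreal) \<Rightarrow>
    'b topology \<Rightarrow> ('b \<Rightarrow> 'b \<Rightarrow> ennreal) \<Rightarrow> ('a \<Rightarrow> 'b) \<Rightarrow> bool" where
  "metCH_embedding T d T' d' f \<longleftrightarrow> metCH_mor T d T' d' f \<and> inj_on f (topspace T) \<and>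
     (\<forall>x\<in>topspace T. \<forall>y\<in>topspace T. d' (f x) (f y) = d x y)"

text \<open>Pushout square  X --f--> Y, X --h--> Z, Y --gY--> P, Z --gZ--> P
  in MetCH_sep, with the universal property tested against all objects
  whose carrier lives in the type 'q.\<close>
definition metCH_pushout ::
  "'q itself \<Rightarrow>
   'x topology \<Rightarrow> ('x \<Rightarrow> 'x \<Rightarrow> ennreal) \<Rightarrow>
   'y topology \<Rightarrow> ('y \<Rightarrow> 'y \<Rightarrow> ennreal) \<Rightarrow>
   'z topology \<Rightarrow> ('z \<Rightarrow> 'z \<Rightarrow> ennreal) \<Rightarrow>
   'p topology \<Rightarrow> ('p \<Rightarrow> 'p \<Rightarrow> ennreal) \<Rightarrow>
   ('x \<Rightarrow> 'y) \<Rightarrow> ('x \<Rightarrow> 'z) \<Rightarrow> ('y \<Rightarrow> 'p) \<Rightarrow> ('z \<Rightarrow> 'p) \<Rightarrow> bool" where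
  "metCH_pushout _ X dX Y dY Z dZ P dP f h gY gZ \<longleftrightarrow>
     metCH_sep X dX \<and> metCH_sep Y dY \<and> metCH_sep Z dZ \<and> metCH_sep P dP \<and>
     metCH_mor X dX Y dY f \<and> metCH_mor X dX Z dZ h \<and>
     metCH_mor Y dY P dP gY \<and> metCH_mor Z dZ P dP gZ \<and>
     (\<forall>x\<in>topspace X. gY (f x) = gZ (h x)) \<and>
     (\<forall>(Q :: 'q topology) dQ a b.
        metCH_sep Q dQ \<and> metCH_mor Y dY Q dQ a \<and> metCH_mor Z dZ Q dQ b \<and>
        (\<forall>x\<in>topspace X. a (f x) = b (h x)) \<longrightarrow>
        (\<exists>u. metCH_mor P dP Q dQ u \<and>
             (\<forall>y\<in>topspace Y. u (gY y) = a y) \<and> (\<forall>z\<in>topspace Z. u (gZ z) = b z) \<and>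
             (\<forall>v. metCH_mor P dP Q dQ v \<and>
                  (\<forall>y\<in>topspace Y. v (gY y) = a y) \<and> (\<forall>z\<in>topspace Z. v (gZ z) = b z)
                  \<longrightarrow> (\<forall>p\<in>topspace P. v p = u p))))"

end

(* Glue Y and Z along X.  On the disjoint union Y + Z, a path from s to t either stays inside
   one summand, or walks to a seam point f x ~ h x, crosses inside Z to a seam point h x', and
   leaves from there.  Since dZ (h x) (h x') <= dX x x' = dY (f x) (f x'), a detour through Y
   between two seam points never pays, so the infimum over these paths is already a quasi-metric;
   it restricts to dZ on Z and is at most dY on Y.  Compactness of X makes it lower
   semicontinuous, so identifying points at distance 0 in both directions gives an object of
   MetCH_sep with a cocone from Y and Z whose Z-leg is an embedding.  That cocone factors
   through the pushout, and an embedding that factors through gZ forces gZ to be one. *)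

theory Submission
  imports Defs
begin

section \<open>Lower semicontinuous functions into [0, \<infinity>]\<close>

lemma INF_ennreal_add_const_on: "(INF i\<in>I. A i) + (c::ennreal) = (INF i\<in>I. A i + c)"
proof (cases "I = {}")
  case False
  have "(INF s\<in>A ` I. s + c) = Inf (A ` I) + c"
    by (rule continuous_at_Inf_mono[symmetric])
       (auto simp: mono_def add_mono False intro!: continuous_intros)
  then show ?thesis by (simp add: image_comp o_def)
qed simp

lemma INF_ennreal_const_add_on: "(c::ennreal) + (INF i\<in>I. A i) = (INF i\<in>I. c + A i)"
  using INF_ennreal_add_const_on[of A I c] by (simp add: add.commute)

lemma min_add_distrib_left_ennreal: "min x y + (z::ennreal) = min (x + z) (y + z)"
  by (simp add: min_def add_right_mono antisym)

lemma min_add_distrib_right_ennreal: "(x::ennreal) + min y z = min (x + y) (x + z)"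
  using min_add_distrib_left_ennreal[of y z x] by (simp add: add.commute)

lemma ennreal_less_add_cases:
  fixes u a b :: ennreal
  assumes "u < a + b"
  shows "u < a \<or> u < b \<or> (\<exists>v<a. \<exists>w<b. u \<le> v + w)"
proof (rule ccontr)
  assume no_split: "\<not> ?thesis"
  then have "a \<le> u" "b \<le> u" by auto
  have "u < top" using assms top.not_eq_extremum by fastforce
  then have "a < top" "b < top" using \<open>a \<le> u\<close> \<open>b \<le> u\<close> by auto
  have "u - b < a" using assms \<open>b < top\<close> \<open>b \<le> u\<close> by (simp add: minus_less_iff_ennreal)
  then obtain v where "u - b < v" "v < a" using dense by blast
  then have "u - v < b"
    using \<open>b < top\<close> \<open>b \<le> u\<close> \<open>a \<le> u\<close> \<open>a < top\<close>
    by (simp add: minus_less_iff_ennreal add.commute)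
  then obtain w where "u - v < w" "w < b" using dense by blast
  then have "u \<le> v + w" using \<open>v < a\<close> \<open>a \<le> u\<close> \<open>a < top\<close>
    by (simp add: minus_less_iff_ennreal add.commute)
  then show False using no_split \<open>v < a\<close> \<open>w < b\<close> by blast
qed

definition upper_continuous_map :: "'a topology \<Rightarrow> ('a \<Rightarrow> ennreal) \<Rightarrow> bool" where
  "upper_continuous_map T F \<longleftrightarrow> (\<forall>u. openin T {x \<in> topspace T. u < F x})"

lemma upper_continuous_iff_map:
  "upper_continuous T d \<longleftrightarrow> upper_continuous_map (prod_topology T T) (\<lambda>p. d (fst p) (snd p))"
  by (simp add: upper_continuous_def upper_continuous_map_def)

lemma closedin_upper_continuous_sublevel:
  assumes "upper_continuous_map T F"
  shows "closedin T {x \<in> topspace T. F x \<le> u}"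
proof -
  have "{x \<in> topspace T. F x \<le> u} = topspace T - {x \<in> topspace T. u < F x}" by auto
  then show ?thesis using assms by (simp add: upper_continuous_map_def closedin_diff)
qed

lemma upper_continuous_map_compose:
  assumes "upper_continuous_map T F" "continuous_map T' T g"
  shows "upper_continuous_map T' (\<lambda>x. F (g x))"
  unfolding upper_continuous_map_def
proof
  fix u
  have "openin T' {x \<in> topspace T'. g x \<in> {y \<in> topspace T. u < F y}}"
    using assms unfolding upper_continuous_map_def by (blast intro: openin_continuous_map_preimage)
  moreover have "{x \<in> topspace T'. g x \<in> {y \<in> topspace T. u < F y}} = {x \<in> topspace T'. u < F (g x)}"
    using assms(2) by (auto simp: continuous_map_def)
  ultimately show "openin T' {x \<in> topspace T'. u < F (g x)}" by simp
qed

lemma upper_continuous_map_dist: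
  assumes "upper_continuous T d" "continuous_map K T a" "continuous_map K T b"
  shows "upper_continuous_map K (\<lambda>k. d (a k) (b k))"
  using upper_continuous_map_compose[of _ "\<lambda>p. d (fst p) (snd p)" K "\<lambda>k. (a k, b k)"] assms
  by (simp add: upper_continuous_iff_map continuous_map_pairedI)

lemma upper_continuous_map_min:
  assumes "upper_continuous_map T F" "upper_continuous_map T G"
  shows "upper_continuous_map T (\<lambda>x. min (F x) (G x))"
proof -
  have "{x \<in> topspace T. u < min (F x) (G x)} = {x \<in> topspace T. u < F x} \<inter> {x \<in> topspace T. u < G x}"
    for u by auto
  then show ?thesis using assms by (simp add: upper_continuous_map_def openin_Int)
qed

lemma upper_continuous_map_add:
  assumes F: "upper_continuous_map T F" and G: "upper_continuous_map T G"
  shows "upper_continuous_map T (\<lambda>x. F x + G x)"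
  unfolding upper_continuous_map_def
proof
  fix u
  let ?above = "\<lambda>H v. {x \<in> topspace T. v < H x}"
  let ?split = "?above F u \<union> ?above G u \<union> (\<Union>(v, w)\<in>{(v, w). u \<le> v + w}. ?above F v \<inter> ?above G w)"
  have "{x \<in> topspace T. u < F x + G x} = ?split"
  proof (intro set_eqI iffI)
    fix x assume "x \<in> {x \<in> topspace T. u < F x + G x}"
    then show "x \<in> ?split"
      using ennreal_less_add_cases[of u "F x" "G x"] by blast
  next
    fix x assume "x \<in> ?split"
    then show "x \<in> {x \<in> topspace T. u < F x + G x}"
      by (auto intro: order_less_le_trans[OF _ add_increasing2] order_less_le_trans[OF _ add_increasing]
          order_le_less_trans[OF _ add_strict_mono])
  qed
  moreover have "openin T ?split"
    using F G unfolding upper_continuous_map_def by (intro openin_Un openin_Union openin_Int) auto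
  ultimately show "openin T {x \<in> topspace T. u < F x + G x}" by simp
qed

lemma upper_continuous_map_INF:
  assumes "compact_space K" and F: "upper_continuous_map (prod_topology T K) F"
  shows "upper_continuous_map T (\<lambda>t. INF k\<in>topspace K. F (t, k))"
  unfolding upper_continuous_map_def
proof
  fix u
  let ?low = "\<lambda>v. fst ` {p \<in> topspace (prod_topology T K). F p \<le> v}"
  have "{t \<in> topspace T. u < (INF k\<in>topspace K. F (t, k))} = (\<Union>v\<in>{u<..}. topspace T - ?low v)"
  proof (intro set_eqI iffI)
    fix t assume t: "t \<in> {t \<in> topspace T. u < (INF k\<in>topspace K. F (t, k))}"
    then obtain v where "u < v" "v < (INF k\<in>topspace K. F (t, k))" using dense by blast
    then have "t \<notin> ?low v" by (force dest: INF_lower2[of _ _ "\<lambda>k. F (t, k)"])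
    then show "t \<in> (\<Union>v\<in>{u<..}. topspace T - ?low v)" using t \<open>u < v\<close> by blast
  next
    fix t assume "t \<in> (\<Union>v\<in>{u<..}. topspace T - ?low v)"
    then obtain v where "u < v" "t \<in> topspace T" "t \<notin> ?low v" by blast
    then have "v \<le> (INF k\<in>topspace K. F (t, k))"
      by (force intro: INF_greatest simp: not_le image_iff)
    then show "t \<in> {t \<in> topspace T. u < (INF k\<in>topspace K. F (t, k))}"
      using \<open>u < v\<close> \<open>t \<in> topspace T\<close> by simp
  qed
  moreover have "closedin T (?low v)" for v
    using closed_map_fst[OF \<open>compact_space K\<close>] closedin_upper_continuous_sublevel[OF F]
    unfolding closed_map_def by blast
  then have "openin T (\<Union>v\<in>{u<..}. topspace T - ?low v)"
    by (intro openin_Union) (auto intro: openin_diff)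
  ultimately show "openin T {t \<in> topspace T. u < (INF k\<in>topspace K. F (t, k))}"
    by simp
qed

section \<open>Disjoint unions\<close>

lemma Inl_in_Plus [simp]: "Inl a \<in> A <+> B \<longleftrightarrow> a \<in> A"
  and Inr_in_Plus [simp]: "Inr b \<in> A <+> B \<longleftrightarrow> b \<in> B"
  by auto

lemma vimage_Inl_Plus [simp]: "Inl -` (A <+> B) = A"
  and vimage_Inr_Plus [simp]: "Inr -` (A <+> B) = B"
  by auto

definition Plus_topology :: "'a topology \<Rightarrow> 'b topology \<Rightarrow> ('a + 'b) topology" where
  "Plus_topology Y Z = topology (\<lambda>U. U \<subseteq> topspace Y <+> topspace Z \<and>
     openin Y (Inl -` U) \<and> openin Z (Inr -` U))"

lemma openin_Plus_topology:
  "openin (Plus_topology Y Z) U \<longleftrightarrow>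
     U \<subseteq> topspace Y <+> topspace Z \<and> openin Y (Inl -` U) \<and> openin Z (Inr -` U)"
proof -
  have "istopology (\<lambda>U. U \<subseteq> topspace Y <+> topspace Z \<and> openin Y (Inl -` U) \<and> openin Z (Inr -` U))"
    unfolding istopology_def by (auto simp: vimage_Union intro!: openin_Int openin_Union)
  then show ?thesis by (simp add: Plus_topology_def)
qed

lemma topspace_Plus_topology [simp]: "topspace (Plus_topology Y Z) = topspace Y <+> topspace Z"
proof (rule subset_antisym)
  show "topspace (Plus_topology Y Z) \<subseteq> topspace Y <+> topspace Z"
    using openin_topspace[of "Plus_topology Y Z"] by (simp only: openin_Plus_topology)
  show "topspace Y <+> topspace Z \<subseteq> topspace (Plus_topology Y Z)"
    by (rule openin_subset) (simp add: openin_Plus_topology)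
qed

lemma continuous_map_Inl: "continuous_map Y (Plus_topology Y Z) Inl"
  and continuous_map_Inr: "continuous_map Z (Plus_topology Y Z) Inr"
proof -
  have "{y \<in> topspace Y. Inl y \<in> U} = Inl -` U \<and> {z \<in> topspace Z. Inr z \<in> U} = Inr -` U"
    if "U \<subseteq> topspace Y <+> topspace Z" for U
    using that by blast
  then show "continuous_map Y (Plus_topology Y Z) Inl" "continuous_map Z (Plus_topology Y Z) Inr"
    unfolding continuous_map_def openin_Plus_topology by auto
qed

lemma openin_Plus_topology_Inl:
  fixes Y :: "'a topology" and Z :: "'b topology"
  assumes "openin Y U"
  shows "openin (Plus_topology Y Z) (Inl ` U)"
proof -
  have "Inl -` (Inl ` U :: ('a + 'b) set) = U" "Inr -` (Inl ` U :: ('a + 'b) set) = {}" by auto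
  then show ?thesis using openin_subset[OF assms] by (auto simp: openin_Plus_topology assms)
qed

lemma openin_Plus_topology_Inr:
  fixes Y :: "'a topology" and Z :: "'b topology"
  assumes "openin Z V"
  shows "openin (Plus_topology Y Z) (Inr ` V)"
proof -
  have "Inr -` (Inr ` V :: ('a + 'b) set) = V" "Inl -` (Inr ` V :: ('a + 'b) set) = {}" by auto
  then show ?thesis using openin_subset[OF assms] by (auto simp: openin_Plus_topology assms)
qed

lemma compact_space_Plus_topology:
  assumes "compact_space Y" "compact_space Z"
  shows "compact_space (Plus_topology Y Z)"
proof -
  have "compactin (Plus_topology Y Z) (Inl ` topspace Y)" "compactin (Plus_topology Y Z) (Inr ` topspace Z)"
    using assms by (auto intro: image_compactin continuous_map_Inl continuous_map_Inr simp: compact_space_def)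
  then show ?thesis by (simp add: compact_space_def Plus_def compactin_Un)
qed

lemma openin_prod_Plus_topology:
  assumes "W \<subseteq> (topspace Y <+> topspace Z) \<times> (topspace Y' <+> topspace Z')"
    and "openin (prod_topology Y Y') {p. (Inl (fst p), Inl (snd p)) \<in> W}"
    and "openin (prod_topology Y Z') {p. (Inl (fst p), Inr (snd p)) \<in> W}"
    and "openin (prod_topology Z Y') {p. (Inr (fst p), Inl (snd p)) \<in> W}"
    and "openin (prod_topology Z Z') {p. (Inr (fst p), Inr (snd p)) \<in> W}"
  shows "openin (prod_topology (Plus_topology Y Z) (Plus_topology Y' Z')) W"
proof -
  have rectangle: "\<exists>U V. openin (Plus_topology Y Z) U \<and> openin (Plus_topology Y' Z') V \<and>
      e a \<in> U \<and> e' b \<in> V \<and> U \<times> V \<subseteq> W"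
    if W_open: "openin (prod_topology A B) {p. (e (fst p), e' (snd p)) \<in> W}"
      and e: "\<And>U. openin A U \<Longrightarrow> openin (Plus_topology Y Z) (e ` U)"
      and e': "\<And>V. openin B V \<Longrightarrow> openin (Plus_topology Y' Z') (e' ` V)"
      and "(e a, e' b) \<in> W"
    for A B e e' a b
  proof -
    obtain U V where "openin A U" "openin B V" "a \<in> U" "b \<in> V"
      "U \<times> V \<subseteq> {p. (e (fst p), e' (snd p)) \<in> W}"
      using W_open \<open>(e a, e' b) \<in> W\<close> unfolding openin_prod_topology_alt by force
    then show ?thesis using e e' by (intro exI[of _ "e ` U"] exI[of _ "e' ` V"]) auto
  qed
  note Inl = openin_Plus_topology_Inl and Inr = openin_Plus_topology_Inr
  show ?thesis
    unfolding openin_prod_topology_alt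
  proof (intro allI impI)
    fix s t assume "(s, t) \<in> W"
    then show "\<exists>U V. openin (Plus_topology Y Z) U \<and> openin (Plus_topology Y' Z') V \<and>
        s \<in> U \<and> t \<in> V \<and> U \<times> V \<subseteq> W"
      using rectangle[OF assms(2) Inl Inl] rectangle[OF assms(3) Inl Inr]
        rectangle[OF assms(4) Inr Inl] rectangle[OF assms(5) Inr Inr]
      by (cases s; cases t) auto
  qed
qed

lemma Hausdorff_space_Plus_topology:
  assumes "Hausdorff_space Y" "Hausdorff_space Z"
  shows "Hausdorff_space (Plus_topology Y Z)"
proof -
  let ?S = "Plus_topology Y Z"
  let ?off_diagonal = "\<lambda>T. topspace (prod_topology T T) - (\<lambda>x. (x, x)) ` topspace T"
  have "openin (prod_topology ?S ?S) (?off_diagonal ?S)"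
  proof (rule openin_prod_Plus_topology)
    have "{p. (Inl (fst p), Inl (snd p)) \<in> ?off_diagonal ?S} = ?off_diagonal Y"
      "{p. (Inr (fst p), Inr (snd p)) \<in> ?off_diagonal ?S} = ?off_diagonal Z"
      by auto
    then show "openin (prod_topology Y Y) {p. (Inl (fst p), Inl (snd p)) \<in> ?off_diagonal ?S}"
      "openin (prod_topology Z Z) {p. (Inr (fst p), Inr (snd p)) \<in> ?off_diagonal ?S}"
      using assms by (simp_all add: Hausdorff_space_closedin_diagonal closedin_def)
    have "{p. (Inl (fst p), Inr (snd p)) \<in> ?off_diagonal ?S} = topspace (prod_topology Y Z)"
      "{p. (Inr (fst p), Inl (snd p)) \<in> ?off_diagonal ?S} = topspace (prod_topology Z Y)"
      by auto
    then show "openin (prod_topology Y Z) {p. (Inl (fst p), Inr (snd p)) \<in> ?off_diagonal ?S}"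
      "openin (prod_topology Z Y) {p. (Inr (fst p), Inl (snd p)) \<in> ?off_diagonal ?S}"
      by (metis openin_topspace)+
  qed auto
  then show ?thesis
    unfolding Hausdorff_space_closedin_diagonal closedin_def by auto
qed

definition Plus_dist ::
    "('a \<Rightarrow> 'a \<Rightarrow> ennreal) \<Rightarrow> ('b \<Rightarrow> 'b \<Rightarrow> ennreal) \<Rightarrow> 'a + 'b \<Rightarrow> 'a + 'b \<Rightarrow> ennreal" where
  "Plus_dist dY dZ s t =
     (case (s, t) of (Inl y, Inl y') \<Rightarrow> dY y y' | (Inr z, Inr z') \<Rightarrow> dZ z z' | _ \<Rightarrow> \<infinity>)"

lemma Plus_dist_simps [simp]:
  "Plus_dist dY dZ (Inl y) (Inl y') = dY y y'"
  "Plus_dist dY dZ (Inr z) (Inr z') = dZ z z'"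
  "Plus_dist dY dZ (Inl y) (Inr z) = \<infinity>"
  "Plus_dist dY dZ (Inr z) (Inl y) = \<infinity>"
  by (simp_all add: Plus_dist_def)

lemma metric_on_Plus_dist:
  assumes "metric_on A dY" "metric_on B dZ"
  shows "metric_on (A <+> B) (Plus_dist dY dZ)"
  using assms by (auto simp: metric_on_def)

lemma upper_continuous_Plus_dist:
  assumes dY: "upper_continuous Y dY" and dZ: "upper_continuous Z dZ"
  shows "upper_continuous (Plus_topology Y Z) (Plus_dist dY dZ)"
  unfolding upper_continuous_def
proof
  fix u :: ennreal
  let ?W = "{p \<in> topspace (Plus_topology Y Z) \<times> topspace (Plus_topology Y Z).
    u < Plus_dist dY dZ (fst p) (snd p)}"
  have "{p. (Inl (fst p), Inl (snd p)) \<in> ?W} = {p \<in> topspace Y \<times> topspace Y. u < dY (fst p) (snd p)}"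
    "{p. (Inr (fst p), Inr (snd p)) \<in> ?W} = {p \<in> topspace Z \<times> topspace Z. u < dZ (fst p) (snd p)}"
    "{p. (Inl (fst p), Inr (snd p)) \<in> ?W} = (if u < \<infinity> then topspace (prod_topology Y Z) else {})"
    "{p. (Inr (fst p), Inl (snd p)) \<in> ?W} = (if u < \<infinity> then topspace (prod_topology Z Y) else {})"
    by auto
  then show "openin (prod_topology (Plus_topology Y Z) (Plus_topology Y Z)) ?W"
    using dY dZ unfolding upper_continuous_def
    by (intro openin_prod_Plus_topology) (auto simp: openin_prod_Times_iff)
qed

section \<open>Separated quotients\<close>

definition quotient_topology :: "'a topology \<Rightarrow> ('a \<Rightarrow> 'b) \<Rightarrow> 'b topology" where
  "quotient_topology T q = topology (\<lambda>U. U \<subseteq> q ` topspace T \<and> openin T {x \<in> topspace T. q x \<in> U})"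

lemma openin_quotient_topology:
  "openin (quotient_topology T q) U \<longleftrightarrow> U \<subseteq> q ` topspace T \<and> openin T {x \<in> topspace T. q x \<in> U}"
proof -
  have "{x \<in> topspace T. q x \<in> U \<inter> V} = {x \<in> topspace T. q x \<in> U} \<inter> {x \<in> topspace T. q x \<in> V}"
    "{x \<in> topspace T. q x \<in> \<Union>\<U>} = (\<Union>U\<in>\<U>. {x \<in> topspace T. q x \<in> U})" for U V \<U>
    by auto
  then have "istopology (\<lambda>U. U \<subseteq> q ` topspace T \<and> openin T {x \<in> topspace T. q x \<in> U})"
    unfolding istopology_def by (auto intro!: openin_Int openin_Union)
  then show ?thesis by (simp add: quotient_topology_def)
qed

lemma topspace_quotient_topology [simp]: "topspace (quotient_topology T q) = q ` topspace T"
proof (rule subset_antisym)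
  show "topspace (quotient_topology T q) \<subseteq> q ` topspace T"
    using openin_topspace[of "quotient_topology T q"] by (simp only: openin_quotient_topology)
  have "{x \<in> topspace T. q x \<in> q ` topspace T} = topspace T" by auto
  then show "q ` topspace T \<subseteq> topspace (quotient_topology T q)"
    by (intro openin_subset) (simp add: openin_quotient_topology)
qed

lemma quotient_map_quotient_topology: "quotient_map T (quotient_topology T q) q"
  by (auto simp: quotient_map_def openin_quotient_topology)

lemma metric_on_zero_dist_cong:
  assumes "metric_on A d" "s \<in> A" "s' \<in> A" "t \<in> A" "t' \<in> A"
    and "d s s' = 0" "d s' s = 0" "d t t' = 0" "d t' t = 0"
  shows "d s t = d s' t'"
proof (rule antisym)
  have "d s t \<le> d s s' + (d s' t' + d t' t)"
    using assms(1-5) unfolding metric_on_def by (meson add_left_mono order_trans)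
  then show "d s t \<le> d s' t'" using assms(6-9) by simp
  have "d s' t' \<le> d s' s + (d s t + d t t')"
    using assms(1-5) unfolding metric_on_def by (meson add_left_mono order_trans)
  then show "d s' t' \<le> d s t" using assms(6-9) by simp
qed

lemma metric_on_zero_class_eq_iff:
  assumes "metric_on A d" "s \<in> A" "t \<in> A"
  shows "{r \<in> A. d s r = 0 \<and> d r s = 0} = {r \<in> A. d t r = 0 \<and> d r t = 0} \<longleftrightarrow> d s t = 0 \<and> d t s = 0"
proof
  assume "{r \<in> A. d s r = 0 \<and> d r s = 0} = {r \<in> A. d t r = 0 \<and> d r t = 0}"
  moreover have "d t t = 0" using assms by (simp add: metric_on_def)
  ultimately show "d s t = 0 \<and> d t s = 0" using assms(3) by blast
next
  assume "d s t = 0 \<and> d t s = 0"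
  then have "d s r = d t r \<and> d r s = d r t" if "r \<in> A" for r
    using assms that metric_on_zero_dist_cong[of A d] by (metis metric_on_def)
  then show "{r \<in> A. d s r = 0 \<and> d r s = 0} = {r \<in> A. d t r = 0 \<and> d r t = 0}" by auto
qed

locale separated_quotient =
  fixes T :: "'a topology" and d :: "'a \<Rightarrow> 'a \<Rightarrow> ennreal" and q :: "'a \<Rightarrow> 'b"
  assumes compact: "compact_space T" and Hausdorff: "Hausdorff_space T"
    and metric: "metric_on (topspace T) d" and upper_cont: "upper_continuous T d"
    and q_eq_iff: "\<And>s t. s \<in> topspace T \<Longrightarrow> t \<in> topspace T \<Longrightarrow> q s = q t \<longleftrightarrow> d s t = 0 \<and> d t s = 0"
begin

abbreviation Q :: "'b topology" where "Q \<equiv> quotient_topology T q"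

definition quotient_dist :: "'b \<Rightarrow> 'b \<Rightarrow> ennreal" where
  "quotient_dist p p' = d (inv_into (topspace T) q p) (inv_into (topspace T) q p')"

lemma quotient_dist_eq:
  assumes "s \<in> topspace T" "t \<in> topspace T"
  shows "quotient_dist (q s) (q t) = d s t"
proof -
  let ?s = "inv_into (topspace T) q (q s)" and ?t = "inv_into (topspace T) q (q t)"
  have "?s \<in> topspace T" "?t \<in> topspace T" "q ?s = q s" "q ?t = q t"
    using assms by (auto intro: inv_into_into f_inv_into_f)
  then show ?thesis
    unfolding quotient_dist_def using assms q_eq_iff
    by (metis metric_on_zero_dist_cong[OF metric])
qed

lemma continuous_map_q: "continuous_map T Q q"
  by (rule quotient_imp_continuous_map[OF quotient_map_quotient_topology])

lemma closedin_zero_dist: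
  "closedin (prod_topology T T) {p \<in> topspace T \<times> topspace T. d (fst p) (snd p) = 0 \<and> d (snd p) (fst p) = 0}"
proof -
  have "{p \<in> topspace T \<times> topspace T. d (fst p) (snd p) = 0 \<and> d (snd p) (fst p) = 0} =
      {p \<in> topspace (prod_topology T T). d (fst p) (snd p) \<le> 0} \<inter>
      {p \<in> topspace (prod_topology T T). d (snd p) (fst p) \<le> 0}"
    by auto
  also have "closedin (prod_topology T T) \<dots>"
    using upper_continuous_map_dist[OF upper_cont continuous_map_fst continuous_map_snd]
      upper_continuous_map_dist[OF upper_cont continuous_map_snd continuous_map_fst]
    by (intro closedin_Int closedin_upper_continuous_sublevel)
  finally show ?thesis .
qed

lemma closed_map_q: "closed_map T Q q"
  unfolding closed_map_def
proof (intro allI impI)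
  fix U assume U: "closedin T U"
  txt \<open>The saturation of \<open>U\<close> is a projection of a closed subset of \<open>T \<times> T\<close>, and projecting
    away the compact factor \<open>T\<close> is a closed map.\<close>
  let ?R = "{p \<in> topspace T \<times> topspace T. d (fst p) (snd p) = 0 \<and> d (snd p) (fst p) = 0}"
  have "{s \<in> topspace T. q s \<in> q ` U} = fst ` (?R \<inter> topspace T \<times> U)"
  proof (intro set_eqI iffI)
    fix s assume "s \<in> {s \<in> topspace T. q s \<in> q ` U}"
    then obtain t where "s \<in> topspace T" "t \<in> U" "q s = q t" by auto
    moreover have "t \<in> topspace T" using \<open>t \<in> U\<close> closedin_subset[OF U] by blast
    ultimately have "(s, t) \<in> ?R \<inter> topspace T \<times> U" using q_eq_iff[of s t] by simp
    then show "s \<in> fst ` (?R \<inter> topspace T \<times> U)" by force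
  next
    fix s assume "s \<in> fst ` (?R \<inter> topspace T \<times> U)"
    then obtain t where "(s, t) \<in> ?R" "t \<in> U" by auto
    then have "s \<in> topspace T" "q s = q t" using q_eq_iff[of s t] by auto
    then show "s \<in> {s \<in> topspace T. q s \<in> q ` U}" using \<open>t \<in> U\<close> by blast
  qed
  moreover have "closedin (prod_topology T T) (?R \<inter> topspace T \<times> U)"
    using U closedin_zero_dist by (simp add: closedin_Int closedin_prod_Times_iff)
  ultimately have "closedin T {s \<in> topspace T. q s \<in> q ` U}"
    using closed_map_fst[OF compact, unfolded closed_map_def, rule_format] by simp
  moreover have "q ` U \<subseteq> topspace Q" using closedin_subset[OF U] by auto
  ultimately show "closedin Q (q ` U)"
    using quotient_map_quotient_topology[of T q] unfolding quotient_map_closedin by blast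
qed

lemma Hausdorff_space_Q: "Hausdorff_space Q"
proof (rule normal_t1_imp_Hausdorff_space)
  have "normal_space T"
    using compact Hausdorff by (simp add: compact_Hausdorff_or_regular_imp_normal_space)
  then show "normal_space Q"
    using continuous_map_q closed_map_q by (rule normal_space_continuous_closed_map_image) simp
  show "t1_space Q"
    unfolding t1_space_closedin_singleton
  proof
    fix p assume "p \<in> topspace Q"
    then obtain s where "s \<in> topspace T" "p = q s" by auto
    then have "closedin T {s}"
      using Hausdorff by (simp add: Hausdorff_imp_t1_space closedin_t1_singleton)
    then show "closedin Q {p}"
      using closed_map_q \<open>p = q s\<close> unfolding closed_map_def by (metis image_empty image_insert)
  qed
qed

lemma compact_space_Q: "compact_space Q"
  using compact continuous_map_q image_compactin
  by (fastforce simp: compact_space_def)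

lemma upper_continuous_quotient_dist: "upper_continuous Q quotient_dist"
  unfolding upper_continuous_def
proof
  fix u
  let ?qq = "\<lambda>p. (q (fst p), q (snd p))"
  have qq: "continuous_map (prod_topology T T) (prod_topology Q Q) ?qq"
    using continuous_map_compose[OF continuous_map_fst continuous_map_q]
      continuous_map_compose[OF continuous_map_snd continuous_map_q]
    by (intro continuous_map_pairedI) (simp_all add: o_def)
  have eq: "{p \<in> topspace Q \<times> topspace Q. u < quotient_dist (fst p) (snd p)} =
      topspace (prod_topology Q Q) - ?qq ` {p \<in> topspace (prod_topology T T). d (fst p) (snd p) \<le> u}"
    by (force simp: quotient_dist_eq not_le image_iff)
  have "closedin (prod_topology Q Q) (?qq ` {p \<in> topspace (prod_topology T T). d (fst p) (snd p) \<le> u})"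
    using continuous_imp_closed_map[OF qq] compact Hausdorff_space_Q
      closedin_upper_continuous_sublevel[OF upper_continuous_map_dist[OF upper_cont continuous_map_fst continuous_map_snd]]
    by (simp add: closed_map_def compact_space_prod_topology Hausdorff_space_prod_topology)
  then show "openin (prod_topology Q Q) {p \<in> topspace Q \<times> topspace Q. u < quotient_dist (fst p) (snd p)}"
    unfolding eq by (rule openin_diff[OF openin_topspace])
qed

lemma metCH_sep_quotient: "metCH_sep Q quotient_dist"
  unfolding metCH_sep_def metric_on_def separated_metric_def
  using compact_space_Q Hausdorff_space_Q upper_continuous_quotient_dist metric q_eq_iff
  by (auto simp: quotient_dist_eq metric_on_def)

end

section \<open>Gluing along a compact space\<close>

locale gluing =
  fixes X :: "'x topology" and Y :: "'y topology" and dY :: "'y \<Rightarrow> 'y \<Rightarrow> ennreal"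
    and Z :: "'z topology" and dZ :: "'z \<Rightarrow> 'z \<Rightarrow> ennreal"
    and f :: "'x \<Rightarrow> 'y" and h :: "'x \<Rightarrow> 'z"
  assumes Y: "metCH_sep Y dY" and Z: "metCH_sep Z dZ" and compact_X: "compact_space X"
    and continuous_f: "continuous_map X Y f" and continuous_h: "continuous_map X Z h"
    and dZ_h_le_dY_f: "\<And>x x'. x \<in> topspace X \<Longrightarrow> x' \<in> topspace X \<Longrightarrow> dZ (h x) (h x') \<le> dY (f x) (f x')"
begin

abbreviation S :: "('y + 'z) topology" where "S \<equiv> Plus_topology Y Z"

abbreviation dS :: "'y + 'z \<Rightarrow> 'y + 'z \<Rightarrow> ennreal" where "dS \<equiv> Plus_dist dY dZ"

lemma metric_dS: "metric_on (topspace S) dS"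
  using Y Z by (simp add: metCH_sep_def metric_on_Plus_dist)

lemma dS_self: "s \<in> topspace S \<Longrightarrow> dS s s = 0"
  using metric_dS by (simp add: metric_on_def)

lemma dS_triangle: "s \<in> topspace S \<Longrightarrow> t \<in> topspace S \<Longrightarrow> r \<in> topspace S \<Longrightarrow> dS s r \<le> dS s t + dS t r"
  using metric_dS unfolding metric_on_def by blast

lemma dZ_triangle: "z \<in> topspace Z \<Longrightarrow> z' \<in> topspace Z \<Longrightarrow> z'' \<in> topspace Z \<Longrightarrow> dZ z z'' \<le> dZ z z' + dZ z' z''"
  using dS_triangle[of "Inr z" "Inr z'" "Inr z''"] by simp

lemma f_in_Y: "x \<in> topspace X \<Longrightarrow> f x \<in> topspace Y"
  and h_in_Z: "x \<in> topspace X \<Longrightarrow> h x \<in> topspace Z"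
  using continuous_f continuous_h by (auto simp: continuous_map_def)

definition dist_to_seam :: "'y + 'z \<Rightarrow> 'x \<Rightarrow> ennreal" where
  "dist_to_seam s x = min (dS s (Inl (f x))) (dS s (Inr (h x)))"

definition dist_from_seam :: "'x \<Rightarrow> 'y + 'z \<Rightarrow> ennreal" where
  "dist_from_seam x t = min (dS (Inl (f x)) t) (dS (Inr (h x)) t)"

definition via_seam :: "'y + 'z \<Rightarrow> 'y + 'z \<Rightarrow> ennreal" where
  "via_seam s t = (INF (x, x')\<in>topspace X \<times> topspace X.
     dist_to_seam s x + dZ (h x) (h x') + dist_from_seam x' t)"

definition glued_dist :: "'y + 'z \<Rightarrow> 'y + 'z \<Rightarrow> ennreal" where
  "glued_dist s t = min (dS s t) (via_seam s t)"

lemma dist_to_seam_triangle: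
  assumes "s \<in> topspace S" "t \<in> topspace S" "x \<in> topspace X"
  shows "dist_to_seam s x \<le> dS s t + dist_to_seam t x"
  using assms f_in_Y[OF assms(3)] h_in_Z[OF assms(3)]
  unfolding dist_to_seam_def min_add_distrib_right_ennreal by (intro min.mono dS_triangle) auto

lemma dist_from_seam_triangle:
  assumes "s \<in> topspace S" "t \<in> topspace S" "x \<in> topspace X"
  shows "dist_from_seam x t \<le> dist_from_seam x s + dS s t"
  using assms f_in_Y[OF assms(3)] h_in_Z[OF assms(3)]
  unfolding dist_from_seam_def min_add_distrib_left_ennreal by (intro min.mono dS_triangle) auto

lemma dist_across_seam:
  assumes "t \<in> topspace S" "x \<in> topspace X" "x' \<in> topspace X"
  shows "dZ (h x) (h x') \<le> dist_from_seam x t + dist_to_seam t x'"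
proof (cases t)
  case (Inl y)
  have "dZ (h x) (h x') \<le> dY (f x) (f x')" by (rule dZ_h_le_dY_f[OF assms(2,3)])
  also have "\<dots> \<le> dY (f x) y + dY y (f x')"
    using dS_triangle[of "Inl (f x)" t "Inl (f x')"] f_in_Y assms Inl by simp
  finally show ?thesis using Inl by (simp add: dist_from_seam_def dist_to_seam_def)
next
  case (Inr z)
  then show ?thesis
    using dZ_triangle[of "h x" z "h x'"] h_in_Z assms by (simp add: dist_from_seam_def dist_to_seam_def)
qed

lemma via_seam_le:
  "x \<in> topspace X \<Longrightarrow> x' \<in> topspace X \<Longrightarrow>
    via_seam s t \<le> dist_to_seam s x + dZ (h x) (h x') + dist_from_seam x' t"
  unfolding via_seam_def by (rule INF_lower2[of "(x, x')"]) auto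

lemma via_seam_le_dist_to:
  assumes "s \<in> topspace S" "t \<in> topspace S"
  shows "via_seam s r \<le> dS s t + via_seam t r"
  unfolding via_seam_def[of t r] INF_ennreal_const_add_on
proof (rule INF_greatest, clarify)
  fix x x' assume "x \<in> topspace X" "x' \<in> topspace X"
  then have "via_seam s r \<le> dist_to_seam s x + dZ (h x) (h x') + dist_from_seam x' r"
    by (rule via_seam_le)
  also have "\<dots> \<le> (dS s t + dist_to_seam t x) + dZ (h x) (h x') + dist_from_seam x' r"
    using assms \<open>x \<in> topspace X\<close> by (intro add_right_mono dist_to_seam_triangle)
  finally show "via_seam s r \<le> dS s t + (dist_to_seam t x + dZ (h x) (h x') + dist_from_seam x' r)"
    by (simp add: ac_simps)
qed

lemma via_seam_le_dist_from:
  assumes "t \<in> topspace S" "r \<in> topspace S"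
  shows "via_seam s r \<le> via_seam s t + dS t r"
  unfolding via_seam_def[of s t] INF_ennreal_add_const_on
proof (rule INF_greatest, clarify)
  fix x x' assume "x \<in> topspace X" "x' \<in> topspace X"
  then have "via_seam s r \<le> dist_to_seam s x + dZ (h x) (h x') + dist_from_seam x' r"
    by (rule via_seam_le)
  also have "\<dots> \<le> dist_to_seam s x + dZ (h x) (h x') + (dist_from_seam x' t + dS t r)"
    using assms \<open>x' \<in> topspace X\<close> by (intro add_left_mono dist_from_seam_triangle)
  finally show "via_seam s r \<le> dist_to_seam s x + dZ (h x) (h x') + dist_from_seam x' t + dS t r"
    by (simp add: ac_simps)
qed

lemma via_seam_triangle:
  assumes "t \<in> topspace S"
  shows "via_seam s r \<le> via_seam s t + via_seam t r"
  unfolding via_seam_def[of s t] via_seam_def[of t r] INF_ennreal_add_const_on INF_ennreal_const_add_on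
proof (intro INF_greatest, clarify)
  fix x1 x1' x2 x2'
  assume x: "x1 \<in> topspace X" "x1' \<in> topspace X" "x2 \<in> topspace X" "x2' \<in> topspace X"
  have "dZ (h x1) (h x2') \<le> dZ (h x1) (h x1') + dZ (h x1') (h x2')"
    using x by (intro dZ_triangle h_in_Z)
  also have "\<dots> \<le> dZ (h x1) (h x1') + (dZ (h x1') (h x2) + dZ (h x2) (h x2'))"
    using x by (intro add_left_mono dZ_triangle h_in_Z)
  also have "\<dots> \<le> dZ (h x1) (h x1') + (dist_from_seam x1' t + dist_to_seam t x2) + dZ (h x2) (h x2')"
    using assms x by (simp add: add.assoc add_right_mono dist_across_seam)
  finally have "via_seam s r \<le> dist_to_seam s x1 +
      (dZ (h x1) (h x1') + (dist_from_seam x1' t + dist_to_seam t x2) + dZ (h x2) (h x2')) + dist_from_seam x2' r"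
    using via_seam_le[OF x(1,4), of s r] by (meson add_left_mono add_right_mono order_trans)
  then show "via_seam s r \<le> dist_to_seam s x1 + dZ (h x1) (h x1') + dist_from_seam x1' t +
      (dist_to_seam t x2 + dZ (h x2) (h x2') + dist_from_seam x2' r)"
    by (simp add: ac_simps)
qed

lemma metric_on_glued_dist: "metric_on (topspace S) glued_dist"
  unfolding metric_on_def
proof (intro conjI ballI)
  fix s assume "s \<in> topspace S"
  then show "glued_dist s s = 0" by (simp add: glued_dist_def dS_self)
next
  fix s t r assume "s \<in> topspace S" "t \<in> topspace S" "r \<in> topspace S"
  then show "glued_dist s r \<le> glued_dist s t + glued_dist t r"
    using dS_triangle via_seam_le_dist_to via_seam_le_dist_from via_seam_triangle
    unfolding glued_dist_def min_add_distrib_left_ennreal min_add_distrib_right_ennreal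
    by (simp add: min_le_iff_disj)
qed

lemma glued_dist_Inr:
  assumes "z \<in> topspace Z" "z' \<in> topspace Z"
  shows "glued_dist (Inr z) (Inr z') = dZ z z'"
proof -
  have "dZ z z' \<le> via_seam (Inr z) (Inr z')"
    unfolding via_seam_def
  proof (rule INF_greatest, clarify)
    fix x x' assume "x \<in> topspace X" "x' \<in> topspace X"
    then have "dZ z z' \<le> dZ z (h x) + dZ (h x) z'"
      using assms by (intro dZ_triangle h_in_Z)
    also have "\<dots> \<le> dZ z (h x) + (dZ (h x) (h x') + dZ (h x') z')"
      using assms \<open>x \<in> topspace X\<close> \<open>x' \<in> topspace X\<close> by (intro add_left_mono dZ_triangle h_in_Z)
    finally have "dZ z z' \<le> dZ z (h x) + dZ (h x) (h x') + dZ (h x') z'"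
      by (simp add: add.assoc)
    then show "dZ z z' \<le> dist_to_seam (Inr z) x + dZ (h x) (h x') + dist_from_seam x' (Inr z')"
      by (simp add: dist_to_seam_def dist_from_seam_def)
  qed
  then show ?thesis by (simp add: glued_dist_def min_absorb1)
qed

lemma glued_dist_Inl_le: "glued_dist (Inl y) (Inl y') \<le> dY y y'"
  by (simp add: glued_dist_def min.coboundedI1)

lemma glued_dist_seam:
  assumes "x \<in> topspace X"
  shows "glued_dist (Inl (f x)) (Inr (h x)) = 0" "glued_dist (Inr (h x)) (Inl (f x)) = 0"
proof -
  have "dS (Inl (f x)) (Inl (f x)) = 0" "dS (Inr (h x)) (Inr (h x)) = 0"
    using dS_self[of "Inl (f x)"] dS_self[of "Inr (h x)"] f_in_Y[OF assms] h_in_Z[OF assms] by simp_all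
  then have "via_seam (Inl (f x)) (Inr (h x)) \<le> 0" "via_seam (Inr (h x)) (Inl (f x)) \<le> 0"
    using via_seam_le[OF assms assms, of "Inl (f x)" "Inr (h x)"]
      via_seam_le[OF assms assms, of "Inr (h x)" "Inl (f x)"]
    by (simp_all add: dist_to_seam_def dist_from_seam_def)
  then show "glued_dist (Inl (f x)) (Inr (h x)) = 0" "glued_dist (Inr (h x)) (Inl (f x)) = 0"
    by (simp_all add: glued_dist_def)
qed

lemma upper_continuous_glued_dist: "upper_continuous S glued_dist"
proof -
  let ?K = "prod_topology (prod_topology S S) (prod_topology X X)"
  note comp = continuous_map_compose[unfolded o_def]
  have s: "continuous_map ?K S (\<lambda>p. fst (fst p))" and t: "continuous_map ?K S (\<lambda>p. snd (fst p))"
    and x: "continuous_map ?K X (\<lambda>p. fst (snd p))" and x': "continuous_map ?K X (\<lambda>p. snd (snd p))"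
    by (intro comp[OF continuous_map_fst] comp[OF continuous_map_snd] continuous_map_fst continuous_map_snd)+
  have seam: "continuous_map X S (\<lambda>x. Inl (f x))" "continuous_map X S (\<lambda>x. Inr (h x))"
    using comp[OF continuous_f continuous_map_Inl] comp[OF continuous_h continuous_map_Inr] .
  have dS: "upper_continuous S dS" and dZ: "upper_continuous Z dZ"
    using Y Z by (simp_all add: metCH_sep_def upper_continuous_Plus_dist)
  have "upper_continuous_map ?K (\<lambda>p. dist_to_seam (fst (fst p)) (fst (snd p)) +
      dZ (h (fst (snd p))) (h (snd (snd p))) + dist_from_seam (snd (snd p)) (snd (fst p)))"
    unfolding dist_to_seam_def dist_from_seam_def
    by (intro upper_continuous_map_add upper_continuous_map_min upper_continuous_map_dist[OF dS]
        upper_continuous_map_dist[OF dZ] s t comp[OF x] comp[OF x'] seam continuous_h)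
  from upper_continuous_map_INF[OF _ this]
  have "upper_continuous_map (prod_topology S S) (\<lambda>p. via_seam (fst p) (snd p))"
    using compact_X by (simp add: via_seam_def case_prod_beta compact_space_prod_topology)
  then show ?thesis
    using dS unfolding upper_continuous_iff_map glued_dist_def by (rule upper_continuous_map_min[rotated])
qed

text \<open>The classes are moved into \<open>'y + 'z + 'w\<close> so that the glued space lives on the carrier
  type against which the universal property of the pushout is stated.\<close>

definition glued_class :: "'y + 'z \<Rightarrow> ('y + 'z + 'w) set" where
  "glued_class s = map_sum id Inl ` {t \<in> topspace S. glued_dist s t = 0 \<and> glued_dist t s = 0}"

lemma glued_class_eq_iff:
  assumes "s \<in> topspace S" "t \<in> topspace S"
  shows "(glued_class s :: ('y + 'z + 'w) set) = glued_class t \<longleftrightarrow>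
    glued_dist s t = 0 \<and> glued_dist t s = 0"
proof -
  have "inj (map_sum id (Inl :: 'z \<Rightarrow> 'z + 'w))" by (simp add: sum.inj_map)
  show ?thesis
    unfolding glued_class_def inj_image_eq_iff[OF \<open>inj (map_sum id Inl)\<close>]
    by (rule metric_on_zero_class_eq_iff[OF metric_on_glued_dist assms])
qed

lemma glued_cocone:
  "\<exists>(Q :: ('y + 'z + 'w) set topology) dQ a b. metCH_sep Q dQ \<and> metCH_mor Y dY Q dQ a \<and>
     metCH_embedding Z dZ Q dQ b \<and> (\<forall>x\<in>topspace X. a (f x) = b (h x))"
proof -
  interpret separated_quotient S glued_dist "glued_class :: 'y + 'z \<Rightarrow> ('y + 'z + 'w) set"
    using Y Z metric_on_glued_dist upper_continuous_glued_dist glued_class_eq_iff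
    by unfold_locales
      (simp_all add: metCH_sep_def compact_space_Plus_topology Hausdorff_space_Plus_topology)
  note comp = continuous_map_compose[unfolded o_def]
  show ?thesis
  proof (intro exI conjI)
    show "metCH_mor Y dY Q quotient_dist (\<lambda>y. glued_class (Inl y))"
      using comp[OF continuous_map_Inl continuous_map_q]
      by (simp add: metCH_mor_def quotient_dist_eq glued_dist_Inl_le)
    have "inj_on (\<lambda>z. glued_class (Inr z)) (topspace Z)"
      using Z by (auto simp: inj_on_def glued_class_eq_iff glued_dist_Inr metCH_sep_def separated_metric_def)
    then show "metCH_embedding Z dZ Q quotient_dist (\<lambda>z. glued_class (Inr z))"
      using comp[OF continuous_map_Inr continuous_map_q]
      by (simp add: metCH_embedding_def metCH_mor_def quotient_dist_eq glued_dist_Inr)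
    show "\<forall>x\<in>topspace X. glued_class (Inl (f x)) = glued_class (Inr (h x))"
      by (simp add: glued_class_eq_iff glued_dist_seam f_in_Y h_in_Z)
  qed (rule metCH_sep_quotient)
qed

end

lemma gluing_of_embedding:
  assumes X: "metCH_sep X dX" and Y: "metCH_sep Y dY" and Z: "metCH_sep Z dZ"
    and f: "metCH_embedding X dX Y dY f" and h: "metCH_mor X dX Z dZ h"
  shows "gluing X Y dY Z dZ f h"
proof
  show "compact_space X" using X by (simp add: metCH_sep_def)
  show "continuous_map X Y f" using f by (simp add: metCH_embedding_def metCH_mor_def)
  show "continuous_map X Z h" using h by (simp add: metCH_mor_def)
  show "dZ (h x) (h x') \<le> dY (f x) (f x')" if "x \<in> topspace X" "x' \<in> topspace X" for x x'
    using f h that by (simp add: metCH_mor_def metCH_embedding_def)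
qed (fact Y Z)+

section \<open>Pushouts of embeddings\<close>

lemma metCH_embedding_factor:
  assumes g: "metCH_mor Z dZ P dP g" and u: "metCH_mor P dP Q dQ u"
    and b: "metCH_embedding Z dZ Q dQ b" and factor: "\<forall>z\<in>topspace Z. u (g z) = b z"
  shows "metCH_embedding Z dZ P dP g"
proof -
  have g_in_P: "g z \<in> topspace P" if "z \<in> topspace Z" for z
    using g that by (auto simp: metCH_mor_def continuous_map_def)
  have "dP (g z) (g z') = dZ z z'" if "z \<in> topspace Z" "z' \<in> topspace Z" for z z'
  proof (rule antisym)
    show "dP (g z) (g z') \<le> dZ z z'" using g that by (simp add: metCH_mor_def)
    have "dZ z z' = dQ (u (g z)) (u (g z'))" using b factor that by (simp add: metCH_embedding_def)
    also have "\<dots> \<le> dP (g z) (g z')" using u g_in_P that by (simp add: metCH_mor_def)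
    finally show "dZ z z' \<le> dP (g z) (g z')" .
  qed
  moreover have "inj_on g (topspace Z)"
  proof (rule inj_onI)
    fix z z' assume "z \<in> topspace Z" "z' \<in> topspace Z" "g z = g z'"
    then have "b z = b z'" using factor by metis
    then show "z = z'" using b \<open>z \<in> topspace Z\<close> \<open>z' \<in> topspace Z\<close>
      by (simp add: metCH_embedding_def inj_on_def)
  qed
  ultimately show ?thesis using g by (simp add: metCH_embedding_def)
qed

theorem corollary4p2:
  fixes X :: "'x topology" and dX :: "'x \<Rightarrow> 'x \<Rightarrow> ennreal"
    and Y :: "'y topology" and dY :: "'y \<Rightarrow> 'y \<Rightarrow> ennreal"
    and Z :: "'z topology" and dZ :: "'z \<Rightarrow> 'z \<Rightarrow> ennreal"
    and P :: "'p topology" and dP :: "'p \<Rightarrow> 'p \<Rightarrow> ennreal"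
    and f :: "'x \<Rightarrow> 'y" and h :: "'x \<Rightarrow> 'z" and gY :: "'y \<Rightarrow> 'p" and gZ :: "'z \<Rightarrow> 'p"
  assumes "metCH_pushout TYPE(('y + 'z + 'p) set) X dX Y dY Z dZ P dP f h gY gZ"
    and "metCH_embedding X dX Y dY f"
  shows "metCH_embedding Z dZ P dP gZ"
proof -
  have X: "metCH_sep X dX" and Y: "metCH_sep Y dY" and Z: "metCH_sep Z dZ"
    and h: "metCH_mor X dX Z dZ h" and gZ: "metCH_mor Z dZ P dP gZ"
    using assms(1) by (simp_all add: metCH_pushout_def)
  have universal: "\<exists>u. metCH_mor P dP Q dQ u \<and> (\<forall>z\<in>topspace Z. u (gZ z) = b z)"
    if "metCH_sep Q dQ" "metCH_mor Y dY Q dQ a" "metCH_mor Z dZ Q dQ b" "\<forall>x\<in>topspace X. a (f x) = b (h x)"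
    for Q :: "('y + 'z + 'p) set topology" and dQ a b
    using assms(1) that unfolding metCH_pushout_def by blast
  interpret gluing X Y dY Z dZ f h
    by (rule gluing_of_embedding[OF X Y Z assms(2) h])
  obtain Q :: "('y + 'z + 'p) set topology" and dQ a b where
    cocone: "metCH_sep Q dQ" "metCH_mor Y dY Q dQ a" "metCH_embedding Z dZ Q dQ b"
      "\<forall>x\<in>topspace X. a (f x) = b (h x)"
    using glued_cocone by blast
  then obtain u where u: "metCH_mor P dP Q dQ u" "\<forall>z\<in>topspace Z. u (gZ z) = b z"
    using universal[OF cocone(1,2) _ cocone(4)] cocone(3) by (auto simp: metCH_embedding_def)
  show ?thesis by (rule metCH_embedding_factor[OF gZ u(1) cocone(3) u(2)])
qed

end
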